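(* For every integer $m\ge1$, as formal power series in $q$, \[ \frac{1}{(q;q)_{\infty}} \sum_{l=0}^{m-1}(-1)^{l} q^{\frac{l(3l+1)}{2}}(1-q^{2l+1})= 1+(-1)^{m-1}\sum_{d=1}^{\infty} \frac{q^{d^2+d+\binom{m}{2}}}{(q;q)_{2d}} \frac{1-q^m}{1-q^d}\begin{bmatrix}2d\\ d+m\end{bmatrix}_q \] and \[ \frac{1}{(q;q)_{\infty}} \sum_{l=0}^{m-1}(-1)^{l} q^{\frac{l(3l-1)}{2}}(1-q^{4l+2})= 1+(-1)^{m-1}\sum_{d=1}^{\infty} \frac{q^{d^2+\binom{m}{2}}}{(q;q)_{2d}} \frac{1-q^m}{1-q^d}\begin{bmatrix}2d\\ d+m\end{bmatrix}_q. \]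
   Context: Notation: $(a;q)_n=(1-a)(1-aq)\cdots(1-aq^{n-1})$, $(a;q)_\infty=\prod_{k\ge0}(1-aq^k)$, and $\begin{bmatrix}n\\k\end{bmatrix}_q=\frac{(q;q)_n}{(q;q)_k(q;q)_{n-k}}$ for $n\ge k\ge0$ and $0$ otherwise (so terms with $d<m$ vanish). *)

theory Defs
  imports "HOL-Analysis.Analysis" "HOL-Computational_Algebra.Formal_Power_Series"
begin

definition qpoch :: "nat \<Rightarrow> rat fps" where
  "qpoch n = (\<Prod>k<n. 1 - fps_X ^ (k + 1))"

text \<open>Infinite q-Pochhammer symbol (q;q)_infinity, as an infinite product
  in the (subdegree) topology of formal power series.\<close>
definition qpoch_inf :: "rat fps" where
  "qpoch_inf = (\<Prod>k. 1 - fps_X ^ (k + 1))"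

definition qbinom :: "nat \<Rightarrow> nat \<Rightarrow> rat fps" where
  "qbinom n k = (if k \<le> n then qpoch n / (qpoch k * qpoch (n - k)) else 0)"

end

theory Submission
  imports Defs "HOL-Computational_Algebra.Formal_Laurent_Series"
begin

text \<open>
  Put P(a, b) = \<Sum>k. q^(k^2 + b k) / ((q;q)_k (q;q)_(k+a)), formalised as durfee_series a b.
  The shifts P(a,b) = P(a+1,b) - q^(a+1) P(a+1,b+1) and P(a,b) = P(a,b+1) + q^(b+1) P(a+1,b+2)
  give P(a,a) - P(a+1,a+1) = -q^(a+1) (P(a+1,a+1) - P(a+2,a+2)), which forces P(a,a) to be
  independent of a; comparing n-th coefficients with P(n,n) = 1/(q;q)_n + O(q^(n+1)) yields
  P(a,a) = 1/(q;q)_\<infinity>, and then P(a+1,a) = (1 + q^(a+1))/(q;q)_\<infinity>.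
  Let T_e(m) be the series on the right without the leading 1 and the sign. Termwise rational
  identities give (1 - q) P(1,e) = 1 + T_e(1) and
  T_e(m) + T_e(m+1) = q^(p_e(m)) (1 - q^(2m+1)) P(2m+1, 2m+e), where p_e(m) = m(3m+2e-1)/2.
  By the evaluations of P, the l-th term of the alternating sum on the left is
  (-1)^l q^(p_e(l)) (1 - q^(2l+1)) P(2l+1, 2l+e), so the sum telescopes to 1 + (-1)^(m-1) T_e(m).
\<close>

unbundle no vec_syntax
notation fps_nth (infixl "$" 75)

text \<open>\<open>fps\<close> carries a metric but no topological ring structure, so the linearity of
  \<open>suminf\<close> is proved coefficientwise, for families whose \<open>k\<close>-th member has order
  at least \<open>k\<close>.\<close>

definition order_ge_index :: "(nat \<Rightarrow> 'a::zero fps) \<Rightarrow> bool" where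
  "order_ge_index f \<longleftrightarrow> (\<forall>k n. n < k \<longrightarrow> f k $ n = 0)"

lemma sums_fps_coeffwise:
  fixes f :: "nat \<Rightarrow> 'a::comm_ring_1 fps"
  assumes "order_ge_index f"
  shows "f sums Abs_fps (\<lambda>n. \<Sum>k\<le>n. f k $ n)"
  unfolding sums_def
proof (rule tendsto_fpsI)
  fix n
  show "\<forall>\<^sub>F N in sequentially. (\<Sum>k<N. f k) $ n = Abs_fps (\<lambda>n. \<Sum>k\<le>n. f k $ n) $ n"
    using eventually_gt_at_top[of n]
  proof eventually_elim
    case (elim N)
    have "(\<Sum>k<N. f k) $ n = (\<Sum>k<N. f k $ n)"
      by (simp add: fps_sum_nth)
    also have "\<dots> = (\<Sum>k\<le>n. f k $ n)"
      by (rule sum.mono_neutral_right) (use elim assms in \<open>auto simp: order_ge_index_def\<close>)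
    finally show ?case by simp
  qed
qed

lemma suminf_fps_nth:
  fixes f :: "nat \<Rightarrow> 'a::comm_ring_1 fps"
  assumes "order_ge_index f"
  shows "suminf f $ n = (\<Sum>k\<le>n. f k $ n)"
  using sums_unique[OF sums_fps_coeffwise[OF assms]] by (metis fps_nth_Abs_fps)

lemma order_ge_index_X_power_mult:
  assumes "\<And>k. k \<le> e k"
  shows "order_ge_index (\<lambda>k. fps_X ^ e k * g k)"
  unfolding order_ge_index_def using assms
  by (auto simp: fps_X_power_mult_nth) (meson leD less_le_trans)

lemma order_ge_index_add:
  fixes f g :: "nat \<Rightarrow> 'a::comm_ring_1 fps"
  shows "order_ge_index f \<Longrightarrow> order_ge_index g \<Longrightarrow> order_ge_index (\<lambda>k. f k + g k)"
  by (simp add: order_ge_index_def)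

lemma order_ge_index_diff:
  fixes f g :: "nat \<Rightarrow> 'a::comm_ring_1 fps"
  shows "order_ge_index f \<Longrightarrow> order_ge_index g \<Longrightarrow> order_ge_index (\<lambda>k. f k - g k)"
  by (simp add: order_ge_index_def)

lemma order_ge_index_Suc: "order_ge_index f \<Longrightarrow> order_ge_index (\<lambda>k. f (Suc k))"
  by (auto simp: order_ge_index_def)

lemma suminf_fps_add:
  fixes f g :: "nat \<Rightarrow> 'a::comm_ring_1 fps"
  assumes "order_ge_index f" "order_ge_index g"
  shows "(\<Sum>k. f k + g k) = suminf f + suminf g"
  using assms by (simp add: fps_eq_iff suminf_fps_nth order_ge_index_add sum.distrib)

lemma suminf_fps_diff:
  fixes f g :: "nat \<Rightarrow> 'a::comm_ring_1 fps"
  assumes "order_ge_index f" "order_ge_index g"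
  shows "(\<Sum>k. f k - g k) = suminf f - suminf g"
  using assms by (simp add: fps_eq_iff suminf_fps_nth order_ge_index_diff sum_subtractf)

lemma order_ge_index_mult_left:
  fixes f :: "nat \<Rightarrow> 'a::comm_ring_1 fps"
  shows "order_ge_index f \<Longrightarrow> order_ge_index (\<lambda>k. c * f k)"
  by (auto simp: order_ge_index_def fps_mult_nth intro!: sum.neutral)

lemma suminf_fps_mult_left:
  fixes f :: "nat \<Rightarrow> 'a::comm_ring_1 fps"
  assumes f: "order_ge_index f"
  shows "(\<Sum>k. c * f k) = c * suminf f"
proof (rule fps_ext)
  fix n
  have cf: "order_ge_index (\<lambda>k. c * f k)"
    using f by (rule order_ge_index_mult_left)
  have "(\<Sum>k. c * f k) $ n = (\<Sum>k\<le>n. \<Sum>i=0..n. c $ i * f k $ (n - i))"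
    by (simp add: suminf_fps_nth[OF cf] fps_mult_nth)
  also have "\<dots> = (\<Sum>i=0..n. \<Sum>k\<le>n. c $ i * f k $ (n - i))"
    by (rule sum.swap)
  also have "\<dots> = (\<Sum>i=0..n. c $ i * (\<Sum>k\<le>n - i. f k $ (n - i)))"
  proof (rule sum.cong[OF refl])
    fix i
    have "(\<Sum>k\<le>n. c $ i * f k $ (n - i)) = (\<Sum>k\<le>n - i. c $ i * f k $ (n - i))"
      by (rule sum.mono_neutral_right) (use f in \<open>auto simp: order_ge_index_def\<close>)
    then show "(\<Sum>k\<le>n. c $ i * f k $ (n - i)) = c $ i * (\<Sum>k\<le>n - i. f k $ (n - i))"
      by (simp add: sum_distrib_left)
  qed
  also have "\<dots> = (c * suminf f) $ n"
    by (simp add: fps_mult_nth suminf_fps_nth[OF f])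
  finally show "(\<Sum>k. c * f k) $ n = (c * suminf f) $ n" .
qed

lemma suminf_fps_split_head:
  fixes f :: "nat \<Rightarrow> 'a::comm_ring_1 fps"
  assumes "order_ge_index f"
  shows "suminf f = f 0 + (\<Sum>k. f (Suc k))"
proof (rule fps_ext)
  fix n
  have "suminf f $ n = f 0 $ n + (\<Sum>k<n. f (Suc k) $ n)"
    using assms by (simp add: suminf_fps_nth sum.atMost_shift)
  also have "(\<Sum>k<n. f (Suc k) $ n) = (\<Sum>k\<le>n. f (Suc k) $ n)"
    using assms by (simp add: lessThan_Suc_atMost[symmetric] order_ge_index_def)
  finally show "suminf f $ n = (f 0 + (\<Sum>k. f (Suc k))) $ n"
    using assms by (simp add: suminf_fps_nth order_ge_index_Suc)
qed

lemma suminf_fps_drop_zeros: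
  fixes f :: "nat \<Rightarrow> 'a::comm_ring_1 fps"
  assumes "order_ge_index f" "\<And>k. k < s \<Longrightarrow> f k = 0"
  shows "suminf f = (\<Sum>k. f (k + s))"
  using assms
proof (induction s arbitrary: f)
  case (Suc s)
  have "suminf f = (\<Sum>k. f (Suc k))"
    using suminf_fps_split_head[OF Suc.prems(1)] Suc.prems(2)[of 0] by simp
  also have "\<dots> = (\<Sum>k. f (k + Suc s))"
    using Suc.IH[of "\<lambda>k. f (Suc k)"] Suc.prems order_ge_index_Suc by auto
  finally show ?case .
qed simp

lemma qpoch_0 [simp]: "qpoch 0 = 1"
  by (simp add: qpoch_def)

lemma qpoch_Suc: "qpoch (Suc n) = qpoch n * (1 - fps_X ^ Suc n)"
  by (simp add: qpoch_def)

lemma qpoch_nth_0 [simp]: "qpoch n $ 0 = 1"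
  by (induction n) (simp_all add: qpoch_Suc)

lemma qpoch_nth_stable: "n \<le> N \<Longrightarrow> qpoch N $ n = qpoch n $ n"
proof (induction N)
  case (Suc N)
  show ?case
  proof (cases "n = Suc N")
    case False
    then have "n \<le> N" using Suc.prems by simp
    then have "(fps_X ^ Suc N * qpoch N) $ n = 0"
      by (simp add: fps_X_power_mult_nth del: power_Suc)
    then show ?thesis
      using Suc.IH \<open>n \<le> N\<close> by (simp add: qpoch_Suc algebra_simps)
  qed simp
qed simp

lemma qpoch_inf_nth:
  assumes "n \<le> N"
  shows "qpoch_inf $ n = qpoch N $ n"
proof -
  define Q where "Q = Abs_fps (\<lambda>n. qpoch n $ n)"
  have "(\<lambda>N. \<Prod>k\<le>N. 1 - fps_X ^ (k + 1)) \<longlonglongrightarrow> Q"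
  proof (rule tendsto_fpsI)
    fix n
    show "\<forall>\<^sub>F N in sequentially. (\<Prod>k\<le>N. 1 - fps_X ^ (k + 1)) $ n = Q $ n"
      using eventually_ge_at_top[of n]
    proof eventually_elim
      case (elim N)
      have "(\<Prod>k\<le>N. 1 - fps_X ^ (k + 1)) = qpoch (Suc N)"
        by (simp only: qpoch_def lessThan_Suc_atMost)
      then show ?case using qpoch_nth_stable[of n "Suc N"] elim by (simp add: Q_def)
    qed
  qed
  moreover have "Q $ 0 = 1"
    by (simp add: Q_def)
  ultimately have "(\<lambda>k. 1 - fps_X ^ (k + 1)) has_prod Q"
    unfolding has_prod_def raw_has_prod_def by auto
  then have "qpoch_inf = Q"
    unfolding qpoch_inf_def by (rule has_prod_unique[symmetric])
  then show ?thesis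
    using qpoch_nth_stable[OF assms] by (metis Q_def fps_nth_Abs_fps)
qed

lemma fps_inverse_nth_eqI:
  fixes f g :: "'a::field fps"
  assumes "\<And>j. j \<le> n \<Longrightarrow> f $ j = g $ j" "f $ 0 \<noteq> 0" "g $ 0 \<noteq> 0"
  shows "inverse f $ n = inverse g $ n"
proof -
  have "inverse f - inverse g = inverse f * inverse g * (g - f)"
  proof -
    have "inverse f * inverse g * (g - f)
        = inverse f * (inverse g * g) - inverse g * (inverse f * f)"
      by (simp add: algebra_simps)
    also have "\<dots> = inverse f - inverse g"
      using assms(2,3) by (simp add: inverse_mult_eq_1)
    finally show ?thesis by simp
  qed
  moreover have "(inverse f * inverse g * (g - f)) $ n = 0"
    unfolding fps_mult_nth[of _ "g - f"] using assms(1) by (intro sum.neutral) auto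
  ultimately have "(inverse f - inverse g) $ n = 0" by simp
  then show ?thesis by simp
qed

lemma inverse_qpoch_inf_nth: "inverse qpoch_inf $ n = inverse (qpoch n) $ n"
  by (rule fps_inverse_nth_eqI) (auto simp: qpoch_inf_nth)

lemma qpoch_nonzero [simp]: "qpoch n \<noteq> 0"
  using qpoch_nth_0[of n] by (metis fps_zero_nth zero_neq_one)

text \<open>Identities between quotients of power series are checked in the field of Laurent series.\<close>

lemma fps_to_fls_inverse_unit [simp]:
  fixes f :: "'a::field fps"
  shows "f $ 0 \<noteq> 0 \<Longrightarrow> fps_to_fls (inverse f) = inverse (fps_to_fls f)"
  by (simp add: fls_inverse_fps_to_fls)

lemma fps_to_fls_divide_unit [simp]:
  fixes f g :: "'a::field fps"
  shows "g $ 0 \<noteq> 0 \<Longrightarrow> fps_to_fls (f / g) = fps_to_fls f / fps_to_fls g"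
  using fls_divide_fps_to_fls[of g f] by simp

lemma fls_X_power_neq_one [simp]: "0 < j \<Longrightarrow> (fls_X ^ j :: 'a::field fls) \<noteq> 1"
proof
  assume "0 < j" "fls_X ^ j = (1 :: 'a fls)"
  then have "fls_nth (fls_X ^ j :: 'a fls) 0 = fls_nth 1 0" by simp
  with \<open>0 < j\<close> show False by simp
qed

lemma fps_to_fls_qpoch_Suc:
  "fps_to_fls (qpoch (Suc n)) = fps_to_fls (qpoch n) * (1 - fls_X ^ Suc n)"
  by (simp add: qpoch_Suc fls_times_fps_to_fls fps_to_fls_power)

lemmas fps_to_fls_simps = fls_times_fps_to_fls fps_to_fls_power

definition durfee_term :: "nat \<Rightarrow> nat \<Rightarrow> nat \<Rightarrow> rat fps" where
  "durfee_term a b k = fps_X ^ (k * k + b * k) * inverse (qpoch k * qpoch (k + a))"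

definition durfee_series :: "nat \<Rightarrow> nat \<Rightarrow> rat fps" where
  "durfee_series a b = (\<Sum>k. durfee_term a b k)"

lemma order_ge_index_durfee_term: "order_ge_index (durfee_term a b)"
  unfolding durfee_term_def
  by (rule order_ge_index_X_power_mult) (meson le_add1 le_square order_trans)

lemma fps_to_fls_durfee_term:
  "fps_to_fls (durfee_term a b k)
     = fls_X ^ (k * k + b * k) / (fps_to_fls (qpoch k) * fps_to_fls (qpoch (k + a)))"
  by (simp add: durfee_term_def fps_to_fls_simps fps_mult_nth_0 divide_inverse)

lemma fps_inverse_mult_cancel_right:
  fixes f c :: "'a::field fps"
  assumes "f $ 0 \<noteq> 0" "c $ 0 \<noteq> 0"
  shows "inverse (f * c) * c = inverse f"
  using assms by (simp add: fps_inverse_mult inverse_mult_eq_1 mult.assoc)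

lemma durfee_term_Suc_right: "durfee_term a (Suc b) k = fps_X ^ k * durfee_term a b k"
  by (simp add: durfee_term_def power_add algebra_simps)

lemma durfee_term_Suc_left:
  "durfee_term a b k = durfee_term (Suc a) b k * (1 - fps_X ^ Suc (k + a))"
  unfolding durfee_term_def
  using fps_inverse_mult_cancel_right[of "qpoch k * qpoch (k + a)" "1 - fps_X ^ Suc (k + a)"]
  by (simp add: qpoch_Suc mult.assoc)

lemma durfee_term_Suc_index:
  "durfee_term a b (Suc k) * (1 - fps_X ^ Suc k) = fps_X ^ Suc b * durfee_term (Suc a) (Suc (Suc b)) k"
proof -
  have "qpoch (Suc k) * qpoch (Suc k + a) = qpoch k * qpoch (k + Suc a) * (1 - fps_X ^ Suc k)"
    by (simp add: qpoch_Suc algebra_simps)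
  moreover have "Suc k * Suc k + b * Suc k = Suc b + (k * k + Suc (Suc b) * k)"
    by (simp add: algebra_simps)
  ultimately show ?thesis
    unfolding durfee_term_def
    using fps_inverse_mult_cancel_right[of "qpoch k * qpoch (k + Suc a)" "1 - fps_X ^ Suc k"]
    by (simp only: power_add mult.assoc) simp
qed

lemma durfee_series_recurrence_b:
  "durfee_series a b = durfee_series a (Suc b) + fps_X ^ Suc b * durfee_series (Suc a) (Suc (Suc b))"
proof -
  have "durfee_series a b - durfee_series a (Suc b) = (\<Sum>k. durfee_term a b k - durfee_term a (Suc b) k)"
    unfolding durfee_series_def by (simp add: suminf_fps_diff order_ge_index_durfee_term)
  also have "\<dots> = (\<Sum>k. durfee_term a b (Suc k) - durfee_term a (Suc b) (Suc k))"
    by (subst suminf_fps_split_head, intro order_ge_index_diff order_ge_index_durfee_term)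
       (simp add: durfee_term_def)
  also have "\<dots> = (\<Sum>k. fps_X ^ Suc b * durfee_term (Suc a) (Suc (Suc b)) k)"
    by (simp only: durfee_term_Suc_right[of a b] durfee_term_Suc_index[symmetric] right_diff_distrib
        mult_1_right mult.commute) simp
  also have "\<dots> = fps_X ^ Suc b * durfee_series (Suc a) (Suc (Suc b))"
    unfolding durfee_series_def by (rule suminf_fps_mult_left[OF order_ge_index_durfee_term])
  finally show ?thesis by (simp add: algebra_simps)
qed

lemma durfee_series_recurrence_a:
  "durfee_series a b = durfee_series (Suc a) b - fps_X ^ Suc a * durfee_series (Suc a) (Suc b)"
proof -
  have "durfee_term a b = (\<lambda>k. durfee_term (Suc a) b k - fps_X ^ Suc a * durfee_term (Suc a) (Suc b) k)"
    by (simp add: fun_eq_iff durfee_term_Suc_left[of a b] durfee_term_Suc_right[of "Suc a" b]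
        power_add algebra_simps)
  then show ?thesis
    unfolding durfee_series_def
    by (simp add: suminf_fps_diff suminf_fps_mult_left order_ge_index_durfee_term
        order_ge_index_mult_left del: power_Suc)
qed

lemma durfee_series_diag_Suc: "durfee_series (Suc a) (Suc a) = durfee_series a a"
proof -
  define D where "D a = durfee_series a a - durfee_series (Suc a) (Suc a)" for a
  have D_Suc: "D a = - (fps_X ^ Suc a * D (Suc a))" for a
    using durfee_series_recurrence_a[of a a] durfee_series_recurrence_b[of "Suc a" a]
    by (simp add: D_def algebra_simps)
  \<comment> \<open>Each coefficient of \<open>D a\<close> vanishes or equals one of \<open>D (Suc a)\<close> of smaller index.\<close>
  have "D a $ n = 0" for n
  proof (induction n arbitrary: a rule: less_induct)
    case (less n)
    show ?case
    proof (cases "n < Suc a")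
      case False
      then show ?thesis
        using less.IH[of "n - Suc a" "Suc a"]
        by (subst D_Suc) (simp add: fps_X_power_mult_nth del: power_Suc)
    qed (subst D_Suc, simp add: fps_X_power_mult_nth del: power_Suc)
  qed
  then show ?thesis
    by (simp add: fps_eq_iff D_def)
qed

lemma durfee_series_diag_nth: "durfee_series n n $ n = inverse (qpoch n) $ n"
proof -
  have "durfee_term n n k $ n = (if k = 0 then inverse (qpoch n) $ n else 0)" for k
  proof (cases k)
    case (Suc j)
    then have "n < k * k + n * k" by simp
    then show ?thesis
      using Suc by (simp add: durfee_term_def fps_X_power_mult_nth del: mult_Suc mult_Suc_right)
  qed (simp add: durfee_term_def)
  then show ?thesis
    by (simp add: durfee_series_def suminf_fps_nth order_ge_index_durfee_term)
qed

lemma durfee_series_diag: "durfee_series a a = inverse qpoch_inf"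
proof (rule fps_ext)
  have diag_const: "durfee_series a a = durfee_series 0 0" for a
    by (induction a) (simp_all add: durfee_series_diag_Suc)
  fix n
  have "durfee_series a a $ n = durfee_series n n $ n"
    by (metis diag_const)
  then show "durfee_series a a $ n = inverse qpoch_inf $ n"
    by (simp add: durfee_series_diag_nth inverse_qpoch_inf_nth)
qed

lemma durfee_series_subdiag: "durfee_series (Suc a) a = (1 + fps_X ^ Suc a) * inverse qpoch_inf"
  using durfee_series_recurrence_b[of "Suc a" a] by (simp add: durfee_series_diag algebra_simps)

text \<open>\<open>tail_term e m (d - 1)\<close> is the \<open>d\<close>-th summand on the right-hand side; \<open>e = 1\<close> and
  \<open>e = 0\<close> give the two identities.\<close>

definition tail_term :: "nat \<Rightarrow> nat \<Rightarrow> nat \<Rightarrow> rat fps" where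
  "tail_term e m d = (let d' = Suc d in
     fps_X ^ (d'\<^sup>2 + e * d' + (m choose 2)) / qpoch (2 * d')
       * ((1 - fps_X ^ m) / (1 - fps_X ^ d')) * qbinom (2 * d') (d' + m))"

lemma tail_term_eq_0: "Suc d < m \<Longrightarrow> tail_term e m d = 0"
  by (simp add: tail_term_def qbinom_def)

lemma fps_to_fls_tail_term:
  assumes "m \<le> Suc d"
  shows "fps_to_fls (tail_term e m d)
    = fls_X ^ ((Suc d)\<^sup>2 + e * Suc d + (m choose 2)) * (1 - fls_X ^ m)
        / ((1 - fls_X ^ Suc d) * fps_to_fls (qpoch (Suc d + m)) * fps_to_fls (qpoch (Suc d - m)))"
proof -
  have "2 * Suc d - (Suc d + m) = Suc d - m" by simp
  then show ?thesis
    using assms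
    by (simp add: tail_term_def qbinom_def Let_def fps_to_fls_simps fps_mult_nth_0 del: power_Suc)
       (simp only: diff_divide_distrib[symmetric] times_divide_eq_right divide_divide_eq_left mult.assoc)
qed

definition pent_exp :: "nat \<Rightarrow> nat \<Rightarrow> nat" where
  "pent_exp e m = m * m + e * m + (m choose 2)"

lemma pent_exp_0 [simp]: "pent_exp e 0 = 0"
  by (simp add: pent_exp_def binomial_eq_0)

lemma pent_exp_Suc: "pent_exp e (Suc m) = pent_exp e m + 3 * m + 1 + e"
proof -
  have "Suc m choose 2 = m + (m choose 2)"
    by (simp add: numeral_2_eq_2)
  then show ?thesis
    by (simp add: pent_exp_def)
qed

lemma pent_exp_1_eq: "l * (3 * l + 1) div 2 = pent_exp 1 l"
proof -
  have "2 * pent_exp 1 l = l * (3 * l + 1)"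
    by (induction l) (simp_all add: pent_exp_Suc algebra_simps)
  then show ?thesis by linarith
qed

lemma pent_exp_0_eq: "l * (3 * l - 1) div 2 = pent_exp 0 l"
proof -
  have "2 * pent_exp 0 l = l * (3 * l - 1)"
  proof (induction l)
    case (Suc l)
    have "3 * Suc l - 1 = 3 * l + 2" by simp
    with Suc show ?case by (simp add: pent_exp_Suc algebra_simps)
  qed simp
  then show ?thesis by linarith
qed

lemma tail_exponent_pair:
  "(Suc (k + c))\<^sup>2 + e * Suc (k + c) + (Suc c choose 2)
     = pent_exp e (Suc c) + (k * k + (2 * c + 2 + e) * k)"
  "(Suc (k + c))\<^sup>2 + e * Suc (k + c) + (Suc (Suc c) choose 2)
     = pent_exp e (Suc c) + (k * k + (2 * c + 2 + e) * k) + Suc c"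
  by (simp_all add: pent_exp_def power2_eq_square algebra_simps numeral_2_eq_2)

text \<open>The extra factor makes the formula valid also for \<open>m = d + 2\<close>, where both sides vanish.\<close>

lemma fps_to_fls_tail_term':
  assumes "m \<le> Suc (Suc d)"
  shows "fps_to_fls (tail_term e m d)
    = fls_X ^ ((Suc d)\<^sup>2 + e * Suc d + (m choose 2))
        * (1 - fls_X ^ m) * (1 - fls_X ^ (Suc (Suc d) - m))
        / ((1 - fls_X ^ Suc d) * fps_to_fls (qpoch (Suc d + m)) * fps_to_fls (qpoch (Suc (Suc d) - m)))"
proof (cases "m = Suc (Suc d)")
  case False
  with assms have le: "m \<le> Suc d" by simp
  then have "fps_to_fls (qpoch (Suc (Suc d) - m))
      = fps_to_fls (qpoch (Suc d - m)) * (1 - fls_X ^ (Suc (Suc d) - m))"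
    using fps_to_fls_qpoch_Suc[of "Suc d - m"] by (simp add: Suc_diff_le)
  moreover have "(1 - fls_X ^ (Suc (Suc d) - m) :: rat fls) \<noteq> 0"
    using le by simp
  ultimately show ?thesis
    using fps_to_fls_tail_term[OF le, of e] by (simp add: mult_ac)
qed (simp add: tail_term_eq_0)

lemma one_minus_power_identity:
  fixes x :: "'a::comm_ring_1"
  shows "(1 - x ^ Suc c) * (1 - x ^ (k + 2 * c + 3)) + x ^ Suc c * (1 - x ^ Suc (Suc c)) * (1 - x ^ k)
       = (1 - x ^ (2 * c + 3)) * (1 - x ^ Suc (k + c))"
  by (simp add: algebra_simps power_add mult_2 numeral_eq_Suc)

lemma add_fractions_common_factor:
  fixes w u D p a b c :: "'a::field"
  assumes "w \<noteq> 0" "u \<noteq> 0" "D \<noteq> 0" "a * u + b = c * w"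
  shows "p * a / (w * D) + p * b / (w * (D * u)) = p * c / (D * u)"
proof -
  have "p * a / (w * D) + p * b / (w * (D * u)) = p * (a * u + b) / (w * (D * u))"
    using assms(1-3) by (simp add: field_simps)
  also have "\<dots> = p * c / (D * u)"
    using assms by (simp add: field_simps)
  finally show ?thesis .
qed

lemma tail_term_pair:
  "tail_term e (Suc c) (k + c) + tail_term e (Suc (Suc c)) (k + c)
     = fps_X ^ pent_exp e (Suc c) * (1 - fps_X ^ (2 * c + 3)) * durfee_term (2 * c + 3) (2 * c + 2 + e) k"
proof -
  define n where "n = pent_exp e (Suc c) + (k * k + (2 * c + 2 + e) * k)"
  define Q where "Q j = fps_to_fls (qpoch j)" for j
  define w where "w = (1 - fls_X ^ Suc (k + c) :: rat fls)"
  define u where "u = (1 - fls_X ^ (k + 2 * c + 3) :: rat fls)"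
  have nonzero: "w \<noteq> 0" "u \<noteq> 0" "Q k * Q (k + 2 * c + 2) \<noteq> 0"
    by (simp_all add: w_def u_def Q_def del: power_Suc)
  have Q_next: "Q (k + 2 * c + 3) = Q (k + 2 * c + 2) * u"
  proof -
    have "k + 2 * c + 3 = Suc (k + 2 * c + 2)"
      by simp
    then show ?thesis
      unfolding Q_def u_def by (simp only: fps_to_fls_qpoch_Suc)
  qed
  have "Suc (k + c) + Suc c = k + 2 * c + 2" "Suc (k + c) - Suc c = k"
    by simp_all
  then have first: "fps_to_fls (tail_term e (Suc c) (k + c))
      = fls_X ^ n * (1 - fls_X ^ Suc c) / (w * (Q k * Q (k + 2 * c + 2)))"
    using fps_to_fls_tail_term[of "Suc c" "k + c" e]
    unfolding tail_exponent_pair n_def[symmetric] w_def[symmetric] Q_def[symmetric]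
    by (simp only: mult_ac)
  have idx: "Suc (k + c) + Suc (Suc c) = k + 2 * c + 3" "Suc (Suc (k + c)) - Suc (Suc c) = k"
    by simp_all
  have second: "fps_to_fls (tail_term e (Suc (Suc c)) (k + c))
      = fls_X ^ n * (fls_X ^ Suc c * (1 - fls_X ^ Suc (Suc c)) * (1 - fls_X ^ k))
          / (w * (Q k * Q (k + 2 * c + 2) * u))"
    using fps_to_fls_tail_term'[of "Suc (Suc c)" "k + c" e]
    unfolding idx tail_exponent_pair n_def[symmetric] w_def[symmetric] Q_def[symmetric] Q_next
    by (simp add: power_add mult_ac)
  have "k + (2 * c + 3) = k + 2 * c + 3"
    by simp
  then have right: "fps_to_fls (fps_X ^ pent_exp e (Suc c) * (1 - fps_X ^ (2 * c + 3))
      * durfee_term (2 * c + 3) (2 * c + 2 + e) k)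
      = fls_X ^ n * (1 - fls_X ^ (2 * c + 3)) / (Q k * Q (k + 2 * c + 2) * u)"
    by (simp only: fps_to_fls_simps fps_to_fls_minus fps_one_to_fls fps_X_to_fls
        fps_to_fls_durfee_term Q_def[symmetric] Q_next) (simp add: n_def power_add mult_ac)
  show ?thesis
    by (subst fps_to_fls_eq_iff[symmetric])
       (simp only: fps_to_fls_plus first second right,
        rule add_fractions_common_factor[OF nonzero],
        simp only: w_def u_def one_minus_power_identity)
qed

lemma order_ge_index_tail_term: "order_ge_index (tail_term e m)"
proof -
  have "tail_term e m = (\<lambda>k. fps_X ^ ((Suc k)\<^sup>2 + e * Suc k + (m choose 2))
      * (inverse (qpoch (2 * Suc k)) * ((1 - fps_X ^ m) / (1 - fps_X ^ Suc k))
         * qbinom (2 * Suc k) (Suc k + m)))"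
    by (simp add: fun_eq_iff tail_term_def fps_divide_unit mult.assoc)
  then show ?thesis
    by (simp only:) (rule order_ge_index_X_power_mult, simp add: power2_eq_square)
qed

lemma suminf_tail_term_pair:
  "(\<Sum>d. tail_term e (Suc c) d) + (\<Sum>d. tail_term e (Suc (Suc c)) d)
     = fps_X ^ pent_exp e (Suc c) * (1 - fps_X ^ (2 * c + 3)) * durfee_series (2 * c + 3) (2 * c + 2 + e)"
proof -
  have "(\<Sum>d. tail_term e (Suc c) d) + (\<Sum>d. tail_term e (Suc (Suc c)) d)
      = (\<Sum>d. tail_term e (Suc c) d + tail_term e (Suc (Suc c)) d)"
    by (simp add: suminf_fps_add order_ge_index_tail_term)
  also have "\<dots> = (\<Sum>k. tail_term e (Suc c) (k + c) + tail_term e (Suc (Suc c)) (k + c))"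
    by (rule suminf_fps_drop_zeros) (simp_all add: order_ge_index_add order_ge_index_tail_term tail_term_eq_0)
  also have "\<dots> = fps_X ^ pent_exp e (Suc c) * (1 - fps_X ^ (2 * c + 3))
      * durfee_series (2 * c + 3) (2 * c + 2 + e)"
    unfolding tail_term_pair durfee_series_def
    by (rule suminf_fps_mult_left[OF order_ge_index_durfee_term])
  finally show ?thesis .
qed

lemma tail_term_1: "tail_term e 1 k = (1 - fps_X) * durfee_term 1 e (Suc k)"
proof -
  have "Suc k + 1 = Suc (Suc k)" "Suc k - 1 = k" "Suc k * Suc k = (Suc k)\<^sup>2"
    "(1::nat) choose 2 = 0"
    by (simp_all add: power2_eq_square binomial_eq_0)
  then show ?thesis
    using fps_to_fls_tail_term[of 1 k e] fps_to_fls_qpoch_Suc[of k]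
    by (subst fps_to_fls_eq_iff[symmetric])
       (simp only: fps_to_fls_durfee_term fps_to_fls_simps fls_times_fps_to_fls fps_to_fls_minus
          fps_one_to_fls fps_X_to_fls power_one_right add_0_right, simp add: mult_ac)
qed

lemma durfee_series_1_tail: "(1 - fps_X) * durfee_series 1 e = 1 + (\<Sum>d. tail_term e 1 d)"
proof -
  have head: "(1 - fps_X) * durfee_term 1 e 0 = 1"
    by (simp add: durfee_term_def qpoch_Suc inverse_mult_eq_1')
  have tail: "(\<Sum>d. tail_term e 1 d) = (1 - fps_X) * (\<Sum>k. durfee_term 1 e (Suc k))"
    unfolding tail_term_1
    by (rule suminf_fps_mult_left[OF order_ge_index_Suc[OF order_ge_index_durfee_term]])
  show ?thesis
    unfolding durfee_series_def suminf_fps_split_head[OF order_ge_index_durfee_term] distrib_left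
      head tail ..
qed

lemma pentagonal_durfee_sum:
  "(\<Sum>l<Suc c. (-1) ^ l * fps_X ^ pent_exp e l * (1 - fps_X ^ (2 * l + 1))
       * durfee_series (2 * l + 1) (2 * l + e))
     = 1 + (-1) ^ c * (\<Sum>d. tail_term e (Suc c) d)"
proof (induction c)
  case 0
  then show ?case using durfee_series_1_tail[of e] by simp
next
  case (Suc c)
  have idx: "2 * Suc c + 1 = 2 * c + 3" "2 * Suc c + e = 2 * c + 2 + e"
    by simp_all
  have "(\<Sum>l<Suc (Suc c). (-1) ^ l * fps_X ^ pent_exp e l * (1 - fps_X ^ (2 * l + 1))
          * durfee_series (2 * l + 1) (2 * l + e))
      = (1 + (-1) ^ c * (\<Sum>d. tail_term e (Suc c) d))
        + (-1) ^ Suc c * (fps_X ^ pent_exp e (Suc c) * (1 - fps_X ^ (2 * c + 3))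
          * durfee_series (2 * c + 3) (2 * c + 2 + e))"
    unfolding sum.lessThan_Suc[of _ "Suc c"] Suc.IH idx by (simp only: mult.assoc)
  also have "\<dots> = (1 + (-1) ^ c * (\<Sum>d. tail_term e (Suc c) d))
      + (-1) ^ Suc c * ((\<Sum>d. tail_term e (Suc c) d) + (\<Sum>d. tail_term e (Suc (Suc c)) d))"
    unfolding suminf_tail_term_pair ..
  also have "\<dots> = 1 + (-1) ^ Suc c * (\<Sum>d. tail_term e (Suc (Suc c)) d)"
    by (simp add: algebra_simps)
  finally show ?case .
qed

lemma pentagonal_sum_odd:
  "(\<Sum>l<Suc c. (-1) ^ l * fps_X ^ (l * (3 * l + 1) div 2) * (1 - fps_X ^ (2 * l + 1)))
       * inverse qpoch_inf
     = 1 + (-1) ^ c * (\<Sum>d. tail_term 1 (Suc c) d)"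
proof -
  have "(1 - fps_X ^ (2 * l + 1)) * inverse qpoch_inf
      = (1 - fps_X ^ (2 * l + 1)) * durfee_series (2 * l + 1) (2 * l + 1)" for l
    by (simp add: durfee_series_diag)
  then show ?thesis
    unfolding sum_distrib_right pent_exp_1_eq pentagonal_durfee_sum[of 1 c, symmetric]
    by (simp only: mult.assoc)
qed

lemma pentagonal_sum_even:
  "(\<Sum>l<Suc c. (-1) ^ l * fps_X ^ (l * (3 * l - 1) div 2) * (1 - fps_X ^ (4 * l + 2)))
       * inverse qpoch_inf
     = 1 + (-1) ^ c * (\<Sum>d. tail_term 0 (Suc c) d)"
proof -
  have "(1 - fps_X ^ (4 * l + 2)) * inverse qpoch_inf
      = (1 - fps_X ^ (2 * l + 1)) * durfee_series (2 * l + 1) (2 * l + 0)" for l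
  proof -
    have "4 * l + 2 = (2 * l + 1) + (2 * l + 1)"
      by simp
    then have "(1 - fps_X ^ (4 * l + 2) :: rat fps)
        = (1 - fps_X ^ (2 * l + 1)) * (1 + fps_X ^ (2 * l + 1))"
      by (simp only: power_add) (simp add: algebra_simps)
    moreover have "durfee_series (2 * l + 1) (2 * l) = (1 + fps_X ^ (2 * l + 1)) * inverse qpoch_inf"
      using durfee_series_subdiag[of "2 * l"] by simp
    ultimately show ?thesis
      by (simp only: add_0_right mult.assoc)
  qed
  then show ?thesis
    unfolding sum_distrib_right pent_exp_0_eq pentagonal_durfee_sum[of 0 c, symmetric]
    by (simp only: mult.assoc)
qed

theorem corollary1p3:
  fixes m :: nat
  assumes "m \<ge> 1"
  shows "(\<Sum>l<m. (-1) ^ l * fps_X ^ (l * (3 * l + 1) div 2) * (1 - fps_X ^ (2 * l + 1))) / qpoch_inf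
           = 1 + (-1) ^ (m - 1) * (\<Sum>d. let d' = Suc d in
               fps_X ^ (d'\<^sup>2 + d' + (m choose 2)) / qpoch (2 * d')
               * ((1 - fps_X ^ m) / (1 - fps_X ^ d')) * qbinom (2 * d') (d' + m))
       \<and> (\<Sum>l<m. (-1) ^ l * fps_X ^ (l * (3 * l - 1) div 2) * (1 - fps_X ^ (4 * l + 2))) / qpoch_inf
           = 1 + (-1) ^ (m - 1) * (\<Sum>d. let d' = Suc d in
               fps_X ^ (d'\<^sup>2 + (m choose 2)) / qpoch (2 * d')
               * ((1 - fps_X ^ m) / (1 - fps_X ^ d')) * qbinom (2 * d') (d' + m))"
proof -
  obtain c where m: "m = Suc c"
    using assms by (cases m) auto
  have "qpoch_inf $ 0 \<noteq> 0"
    by (simp add: qpoch_inf_nth[of 0 0])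
  then have divide: "f / qpoch_inf = f * inverse qpoch_inf" for f
    by (rule fps_divide_unit)
  have tails: "(\<lambda>d. let d' = Suc d in fps_X ^ (d'\<^sup>2 + d' + (m choose 2)) / qpoch (2 * d')
                  * ((1 - fps_X ^ m) / (1 - fps_X ^ d')) * qbinom (2 * d') (d' + m)) = tail_term 1 m"
              "(\<lambda>d. let d' = Suc d in fps_X ^ (d'\<^sup>2 + (m choose 2)) / qpoch (2 * d')
                  * ((1 - fps_X ^ m) / (1 - fps_X ^ d')) * qbinom (2 * d') (d' + m)) = tail_term 0 m"
    by (simp_all add: fun_eq_iff tail_term_def)
  show ?thesis
    unfolding divide tails unfolding m diff_Suc_1
    by (rule conjI[OF pentagonal_sum_odd pentagonal_sum_even])
qed

end
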